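(* Let $G=(V,E)$ be a connected graph having the weighted strict Gauss–Lucas property, and let $v_1,v_2\in V$ be two distinct vertices not joined by an edge. Let $G_1$ be the graph obtained by merging $v_1$ and $v_2$ into a single new vertex $v$, with every edge formerly incident to $v_1$ or $v_2$ now incident to $v$ (keeping multiplicities, so parallel edges may arise). Then $G_1$ has the weighted strict Gauss–Lucas property.
   Context: Graphs may have parallel edges and self-loops; degrees count edges with multiplicity, a loop counting twice. A weight assignment $w:V\to\mathbb{Z}_{>0}$ is legal if $w(v)\ge\deg(v)$ for all $v$. For $0<\beta\le1$ and complex $(z_v)_{v\in V}$, $Z_w(G)=\sum_{\sigma\in\{+,-\}^V}\beta^{d(\sigma)}\prod_{v:\sigma(v)=+}z_v^{w(v)}$, where $d(\sigma)$ is the number (with multiplicity) of edges whose endpoints have different spins, and $\mathcal{D}_G=\sum_{v\in V}z_v\partial/\partial z_v$. $G$ has the weighted strict Gauss–Lucas property if for every legal $w$, every $0<\beta<1$ and every $(z_v)$ with $|z_v|\ge1$ for all $v$, $\mathcal{D}_GZ_w(G)\ne0$. *)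

theory Defs
  imports "HOL-Analysis.Analysis"
begin

text \<open>A finite multigraph: vertex set V, edge multiset E; each edge is a 2-element
  multiset of vertices ({#v,v#} is a loop). Parallel edges = multiplicity in E.\<close>

definition mgraph :: "'a set \<Rightarrow> 'a multiset multiset \<Rightarrow> bool" where
  "mgraph V E \<longleftrightarrow> finite V \<and> (\<forall>e\<in>#E. size e = 2 \<and> set_mset e \<subseteq> V)"

text \<open>Degree with multiplicity; a loop contributes 2.\<close>
definition mdeg :: "'a multiset multiset \<Rightarrow> 'a \<Rightarrow> nat" where
  "mdeg E v = (\<Sum>e\<in>#E. count e v)"

definition adj :: "'a multiset multiset \<Rightarrow> 'a \<Rightarrow> 'a \<Rightarrow> bool" where
  "adj E x y \<longleftrightarrow> {#x, y#} \<in># E"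

definition mconnected :: "'a set \<Rightarrow> 'a multiset multiset \<Rightarrow> bool" where
  "mconnected V E \<longleftrightarrow> (\<forall>x\<in>V. \<forall>y\<in>V. (x, y) \<in> {(a, b). adj E a b}\<^sup>*)"

text \<open>Number of edges (with multiplicity) whose endpoints get different spins,
  where S is the set of vertices with spin +.\<close>
definition dcut :: "'a multiset multiset \<Rightarrow> 'a set \<Rightarrow> nat" where
  "dcut E S = size (filter_mset (\<lambda>e. \<exists>x y. e = {#x, y#} \<and> (x \<in> S) \<noteq> (y \<in> S)) E)"

definition Zw :: "'a set \<Rightarrow> 'a multiset multiset \<Rightarrow> ('a \<Rightarrow> nat) \<Rightarrow> real \<Rightarrow> ('a \<Rightarrow> complex) \<Rightarrow> complex" where
  "Zw V E w \<beta> z = (\<Sum>S\<in>Pow V. complex_of_real (\<beta> ^ dcut E S) * (\<Prod>v\<in>S. z v ^ w v))"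

definition DG :: "'a set \<Rightarrow> (('a \<Rightarrow> complex) \<Rightarrow> complex) \<Rightarrow> ('a \<Rightarrow> complex) \<Rightarrow> complex" where
  "DG V F z = (\<Sum>v\<in>V. z v * deriv (\<lambda>t. F (z(v := t))) (z v))"

definition legal :: "'a set \<Rightarrow> 'a multiset multiset \<Rightarrow> ('a \<Rightarrow> nat) \<Rightarrow> bool" where
  "legal V E w \<longleftrightarrow> (\<forall>v\<in>V. w v > 0 \<and> w v \<ge> mdeg E v)"

definition weighted_strict_GL :: "'a set \<Rightarrow> 'a multiset multiset \<Rightarrow> bool" where
  "weighted_strict_GL V E \<longleftrightarrow>
     (\<forall>w \<beta> z. legal V E w \<longrightarrow> 0 < \<beta> \<longrightarrow> \<beta> < 1 \<longrightarrow> (\<forall>v\<in>V. 1 \<le> norm (z v)) \<longrightarrow>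
        DG V (Zw V E w \<beta>) z \<noteq> 0)"

text \<open>Merging v2 into v1: the merged vertex is named v1, v2 disappears.\<close>
definition merge_edges :: "'a \<Rightarrow> 'a \<Rightarrow> 'a multiset multiset \<Rightarrow> 'a multiset multiset" where
  "merge_edges v1 v2 E = image_mset (image_mset (\<lambda>x. if x = v2 then v1 else x)) E"

end

theory Submission
  imports Defs "HOL-Computational_Algebra.Polynomial"
begin

text \<open>Split a legal weight W of the merged vertex as W = a + b with b the degree of v2 and a at
  least the degree of v1. In D_G Z_w the spins of v1 and v2 then enter only through x = z_v1^a
  and y = z_v2^b, giving a bilinear polynomial A + B x + C y + D x y which, by the hypothesis on G
  and since every x, y of norm at least 1 has roots of norm at least 1, has no zeros with
  norm x, norm y at least 1. A configuration of the merged graph is one of G in which v1 and v2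
  carry the same spin, with the same cut, so the merged operator is A + D u with u = z_v^W.
  Asano's contraction shows A + D u is nonzero for norm u at least 1 when D is nonzero. If D
  vanishes, scale the other variables by a real l > 1: D becomes a nonzero polynomial in l, and
  wherever it is nonzero both B and C are strictly dominated by D, contradicting continuity at
  l = 1 unless B and C vanish too, which the zero-freeness at x = y = 1 rules out.\<close>

section \<open>Asano contraction\<close>

definition zero_free_bilinear :: "complex \<Rightarrow> complex \<Rightarrow> complex \<Rightarrow> complex \<Rightarrow> bool" where
  "zero_free_bilinear A B C D \<longleftrightarrow>
     (\<forall>x y. 1 \<le> norm x \<longrightarrow> 1 \<le> norm y \<longrightarrow> A + B * x + C * y + D * x * y \<noteq> 0)"

lemma zero_free_bilinearD:
  "zero_free_bilinear A B C D \<Longrightarrow> 1 \<le> norm x \<Longrightarrow> 1 \<le> norm y \<Longrightarrow> A + B * x + C * y + D * x * y \<noteq> 0"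
  unfolding zero_free_bilinear_def by blast

lemma zero_free_bilinear_swap:
  assumes "zero_free_bilinear A B C D"
  shows "zero_free_bilinear A C B D"
  unfolding zero_free_bilinear_def
proof (intro allI impI)
  fix x y :: complex
  assume "1 \<le> norm x" "1 \<le> norm y"
  with assms have "A + B * y + C * x + D * y * x \<noteq> 0"
    unfolding zero_free_bilinear_def by blast
  thus "A + C * x + B * y + D * x * y \<noteq> 0"
    by (simp add: algebra_simps)
qed

lemma bilinear_factor:
  fixes A B C D x y :: complex
  assumes "D \<noteq> 0"
  shows "A + B * x + C * y + D * x * y = D * ((x + C / D) * (y + B / D) - (B / D * (C / D) - A / D))"
  using assms by (simp add: field_simps)

lemma norm_of_real_mult_unit:
  fixes s :: complex
  assumes "norm s = 1" "0 \<le> r"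
  shows "norm (complex_of_real r * s) = r"
  using assms by (simp add: norm_mult)

lemma zero_free_bilinear_norm_less:
  assumes zf: "zero_free_bilinear A B C D" and "D \<noteq> 0"
  shows "norm C < norm D"
proof (rule ccontr)
  assume "\<not> norm C < norm D"
  define b c k where "b = B / D" and "c = C / D" and "k = b * c - A / D"
  have factor: "A + B * x + C * y + D * x * y = D * ((x + c) * (y + b) - k)" for x y
    unfolding b_def c_def k_def using bilinear_factor[OF \<open>D \<noteq> 0\<close>] .
  have c: "1 \<le> norm c"
    using \<open>\<not> norm C < norm D\<close> \<open>D \<noteq> 0\<close> by (simp add: c_def norm_divide divide_simps)
  define s where "s = c / norm c"
  have s: "norm s = 1" "c = norm c * s"
    using c by (auto simp: s_def norm_divide)
  show False
  proof (cases "k = 0")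
    case True
    have "A + B * (- c) + C * 1 + D * (- c) * 1 = 0"
      using factor[of "- c" 1] True by simp
    with zero_free_bilinearD[OF zf, of "- c" 1] c show False
      by simp
  next
    case False
    text \<open>Move x radially outwards from -c by e, so that x + c is small and y + b = k / (x + c) is large.\<close>
    define e where "e = norm k / (1 + norm b)"
    have "e > 0"
      using False by (simp add: e_def add_pos_nonneg)
    define x where "x = - (complex_of_real (norm c + e) * s)"
    have xc: "x + c = - complex_of_real e * s"
      using s(2) by (simp add: x_def algebra_simps)
    have "norm x = norm c + e"
      unfolding x_def norm_minus_cancel using s \<open>e > 0\<close> c by (intro norm_of_real_mult_unit) auto
    hence x: "1 \<le> norm x"
      using c \<open>e > 0\<close> by simp
    define y where "y = k / (x + c) - b"
    have "norm (x + c) = e"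
      unfolding xc mult_minus_left norm_minus_cancel using s \<open>e > 0\<close> by (intro norm_of_real_mult_unit) auto
    hence "norm (k / (x + c)) = 1 + norm b"
      using False by (simp add: norm_divide e_def add_pos_nonneg)
    hence "1 \<le> norm y"
      unfolding y_def using norm_triangle_ineq2[of "k / (x + c)" b] by linarith
    moreover have "A + B * x + C * y + D * x * y = 0"
      unfolding factor y_def using \<open>norm (x + c) = e\<close> \<open>e > 0\<close> by auto
    ultimately show False
      using zero_free_bilinearD[OF zf x] by blast
  qed
qed

lemma asano_contraction_ordered:
  assumes zf: "zero_free_bilinear A B C D" and "D \<noteq> 0" and u: "1 \<le> norm u"
    and CB: "norm C \<le> norm B" and BD: "norm B < norm D"
  shows "A + D * u \<noteq> 0"
proof
  assume "A + D * u = 0"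
  define b c k where "b = B / D" and "c = C / D" and "k = b * c - A / D"
  have factor: "A + B * x + C * y + D * x * y = D * ((x + c) * (y + b) - k)" for x y
    unfolding b_def c_def k_def using bilinear_factor[OF \<open>D \<noteq> 0\<close>] .
  have b: "norm b < 1" and cb: "norm c \<le> norm b"
    using BD CB \<open>D \<noteq> 0\<close> by (simp_all add: b_def c_def norm_divide divide_simps)
  have "k = b * c + u"
    using \<open>A + D * u = 0\<close> \<open>D \<noteq> 0\<close> by (simp add: k_def field_simps)
  hence "1 - norm b * norm c \<le> norm k"
    using u norm_triangle_ineq4[of k "b * c"] by (simp add: norm_mult)
  hence "(1 - norm b) * (1 + norm c) \<le> norm k"
    using cb by (simp add: algebra_simps)
  hence k: "1 + norm c \<le> norm k / (1 - norm b)"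
    using b by (simp add: field_simps)
  text \<open>Take y on the unit circle opposite to b, so that y + b has the smallest possible norm 1 - norm b.\<close>
  define s where "s = (if b = 0 then 1 else b / norm b)"
  have s: "norm s = 1" "b = norm b * s"
    by (auto simp: s_def norm_divide)
  define y where "y = - s"
  have yb: "y + b = - (complex_of_real (1 - norm b) * s)"
    using s(2) by (simp add: y_def algebra_simps)
  have "norm (y + b) = 1 - norm b"
    unfolding yb norm_minus_cancel using s b by (intro norm_of_real_mult_unit) auto
  define x where "x = k / (y + b) - c"
  have "1 \<le> norm x"
    unfolding x_def using norm_triangle_ineq2[of "k / (y + b)" c] k \<open>norm (y + b) = 1 - norm b\<close>
    by (simp add: norm_divide)
  moreover have "1 \<le> norm y"
    by (simp add: y_def s)
  moreover have "A + B * x + C * y + D * x * y = 0"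
    unfolding factor x_def using \<open>norm (y + b) = 1 - norm b\<close> b by auto
  ultimately show False
    using zero_free_bilinearD[OF zf] by blast
qed

lemma asano_contraction:
  assumes zf: "zero_free_bilinear A B C D" and "D \<noteq> 0" and "1 \<le> norm u"
  shows "A + D * u \<noteq> 0"
proof -
  have "norm C < norm D" "norm B < norm D"
    using zero_free_bilinear_norm_less zero_free_bilinear_swap zf \<open>D \<noteq> 0\<close> by blast+
  thus ?thesis
    using asano_contraction_ordered[OF zf] asano_contraction_ordered[OF zero_free_bilinear_swap[OF zf]]
      \<open>D \<noteq> 0\<close> \<open>1 \<le> norm u\<close> by (cases "norm C \<le> norm B") auto
qed

lemma asano_contraction_limit:
  fixes A B C D :: "real \<Rightarrow> complex"
  assumes zf: "\<And>l. 1 \<le> l \<Longrightarrow> zero_free_bilinear (A l) (B l) (C l) (D l)"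
    and "isCont B 1" "isCont C 1" "isCont D 1"
    and "finite {l. D l = 0}"
    and u: "1 \<le> norm u"
  shows "A 1 + D 1 * u \<noteq> 0"
proof (cases "D 1 = 0")
  case False
  show ?thesis
    using asano_contraction[OF zf[OF order_refl] False u] .
next
  case True
  show ?thesis
  proof
    assume "A 1 + D 1 * u = 0"
    moreover have "A 1 + B 1 * 1 + C 1 * 1 + D 1 * 1 * 1 \<noteq> 0"
      using zero_free_bilinearD[OF zf[OF order_refl], of 1 1] by simp
    ultimately have "B 1 \<noteq> 0 \<or> C 1 \<noteq> 0"
      using True by auto
    text \<open>Near 1 both B and C are dominated by D, which is impossible since D vanishes at 1 and B, C do not.\<close>
    define g where "g l = norm (B l) + norm (C l) - 2 * norm (D l)" for l
    have "isCont g 1"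
      unfolding g_def using \<open>isCont B 1\<close> \<open>isCont C 1\<close> \<open>isCont D 1\<close> by (intro continuous_intros)
    moreover have "0 < g 1"
      using True \<open>B 1 \<noteq> 0 \<or> C 1 \<noteq> 0\<close> by (auto simp: g_def add_pos_nonneg add_nonneg_pos)
    ultimately have "\<forall>\<^sub>F l in at 1. 0 < g l"
      unfolding isCont_def by (rule order_tendstoD(1))
    then obtain \<delta> where "0 < \<delta>" and g: "\<And>l. l \<noteq> 1 \<Longrightarrow> dist l 1 < \<delta> \<Longrightarrow> 0 < g l"
      by (auto simp: eventually_at)
    have "infinite ({1<..<1 + \<delta>} - {l. D l = 0})"
      using \<open>0 < \<delta>\<close> \<open>finite {l. D l = 0}\<close> by (intro Diff_infinite_finite infinite_Ioo) simp_all
    then obtain l where "l \<in> {1<..<1 + \<delta>} - {l. D l = 0}"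
      by (metis ex_in_conv infinite_imp_nonempty)
    hence l: "1 < l" "l < 1 + \<delta>" "D l \<noteq> 0"
      by simp_all
    have zfl: "zero_free_bilinear (A l) (B l) (C l) (D l)"
      using zf l(1) by simp
    have "norm (C l) < norm (D l)"
      using zero_free_bilinear_norm_less[OF zfl l(3)] .
    moreover have "norm (B l) < norm (D l)"
      using zero_free_bilinear_norm_less[OF zero_free_bilinear_swap[OF zfl] l(3)] .
    moreover have "0 < g l"
      using g l by (simp add: dist_real_def)
    ultimately show False
      by (simp add: g_def)
  qed
qed

section \<open>The Euler operator applied to the partition function\<close>

text \<open>The part of D_G Z_w coming from the spin configurations X \<union> T with T \<subseteq> U, where X is a
  fixed set of plus spins disjoint from U and c its total weight.\<close>
definition euler_sum ::
  "'a multiset multiset \<Rightarrow> real \<Rightarrow> ('a \<Rightarrow> nat) \<Rightarrow> 'a set \<Rightarrow> 'a set \<Rightarrow> nat \<Rightarrow> ('a \<Rightarrow> complex) \<Rightarrow> complex" where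
  "euler_sum E \<beta> w U X c z =
     (\<Sum>T\<in>Pow U. complex_of_real (\<beta> ^ dcut E (X \<union> T)) * of_nat (c + sum w T) * (\<Prod>u\<in>T. z u ^ w u))"

lemma prod_power_fun_upd:
  assumes "finite S"
  shows "(\<Prod>u\<in>S. (z(v := t)) u ^ w u) = t ^ (if v \<in> S then w v else 0) * (\<Prod>u\<in>S - {v}. z u ^ w u)"
proof (cases "v \<in> S")
  case True
  thus ?thesis
    using prod.remove[OF assms True, of "\<lambda>u. (z(v := t)) u ^ w u"] by (auto intro: prod.cong)
next
  case False
  thus ?thesis
    by (auto intro: prod.cong)
qed

lemma mult_of_nat_power_diff_1:
  fixes z :: "'a :: comm_semiring_1"
  shows "z * (of_nat n * z ^ (n - 1)) = of_nat n * z ^ n"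
  by (cases n) (simp_all add: algebra_simps)

lemma DG_term_Zw:
  assumes "finite V"
  shows "z v * deriv (\<lambda>t. Zw V E w \<beta> (z(v := t))) (z v) =
    (\<Sum>S\<in>Pow V. complex_of_real (\<beta> ^ dcut E S) * of_nat (if v \<in> S then w v else 0) * (\<Prod>u\<in>S. z u ^ w u))"
proof -
  define c where "c S = complex_of_real (\<beta> ^ dcut E S)" for S
  define n where "n S = (if v \<in> S then w v else 0)" for S
  define K where "K S = (\<Prod>u\<in>S - {v}. z u ^ w u)" for S
  have fin: "finite S" if "S \<in> Pow V" for S
    using assms that finite_subset by blast
  have "(\<lambda>t. Zw V E w \<beta> (z(v := t))) = (\<lambda>t. \<Sum>S\<in>Pow V. c S * (t ^ n S * K S))"
    unfolding Zw_def c_def n_def K_def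
    by (intro ext sum.cong refl) (simp add: prod_power_fun_upd[OF fin] del: fun_upd_apply)
  moreover have "((\<lambda>t. \<Sum>S\<in>Pow V. c S * (t ^ n S * K S)) has_field_derivative
      (\<Sum>S\<in>Pow V. c S * (of_nat (n S) * z v ^ (n S - 1) * K S))) (at (z v))"
    by (intro derivative_eq_intros) auto
  ultimately have "z v * deriv (\<lambda>t. Zw V E w \<beta> (z(v := t))) (z v) =
      (\<Sum>S\<in>Pow V. c S * (z v * (of_nat (n S) * z v ^ (n S - 1))) * K S)"
    by (simp add: DERIV_imp_deriv sum_distrib_left mult.assoc mult.left_commute)
  also have "\<dots> = (\<Sum>S\<in>Pow V. c S * of_nat (n S) * (\<Prod>u\<in>S. z u ^ w u))"
  proof (intro sum.cong refl)
    fix S assume "S \<in> Pow V"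
    have "(\<Prod>u\<in>S. z u ^ w u) = z v ^ n S * K S"
      using prod_power_fun_upd[OF fin[OF \<open>S \<in> Pow V\<close>], of z v "z v" w] unfolding fun_upd_triv n_def K_def .
    thus "c S * (z v * (of_nat (n S) * z v ^ (n S - 1))) * K S = c S * of_nat (n S) * (\<Prod>u\<in>S. z u ^ w u)"
      unfolding mult_of_nat_power_diff_1 by (simp add: ac_simps)
  qed
  finally show ?thesis
    by (simp add: c_def n_def)
qed

lemma DG_Zw:
  assumes "finite V"
  shows "DG V (Zw V E w \<beta>) z = euler_sum E \<beta> w V {} 0 z"
proof -
  have "DG V (Zw V E w \<beta>) z = (\<Sum>S\<in>Pow V. \<Sum>v\<in>V.
      complex_of_real (\<beta> ^ dcut E S) * of_nat (if v \<in> S then w v else 0) * (\<Prod>u\<in>S. z u ^ w u))"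
    unfolding DG_def DG_term_Zw[OF assms] by (rule sum.swap)
  also have "\<dots> = euler_sum E \<beta> w V {} 0 z"
    unfolding euler_sum_def
  proof (intro sum.cong refl)
    fix S assume "S \<in> Pow V"
    hence "sum w S = (\<Sum>v\<in>V. if v \<in> S then w v else 0)"
      using sum.inter_restrict[OF assms, of w S] by (simp add: Int_absorb1)
    thus "(\<Sum>v\<in>V. complex_of_real (\<beta> ^ dcut E S) * of_nat (if v \<in> S then w v else 0) * (\<Prod>u\<in>S. z u ^ w u)) =
        complex_of_real (\<beta> ^ dcut E ({} \<union> S)) * of_nat (0 + sum w S) * (\<Prod>u\<in>S. z u ^ w u)"
      by (simp add: of_nat_sum sum_distrib_left sum_distrib_right mult.assoc)
  qed
  finally show ?thesis .
qed

lemma sum_Pow_insert: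
  assumes "finite A" "a \<notin> A"
  shows "(\<Sum>S\<in>Pow (insert a A). f S) = (\<Sum>T\<in>Pow A. f T + f (insert a T))"
proof -
  have "inj_on (insert a) (Pow A)"
    using assms(2) by (auto simp: inj_on_def)
  moreover have "Pow A \<inter> insert a ` Pow A = {}"
    using assms(2) by auto
  ultimately show ?thesis
    unfolding Pow_insert using assms(1) by (simp add: sum.union_disjoint sum.reindex sum.distrib)
qed

lemma euler_sum_insert:
  assumes "finite U" "v \<notin> U"
  shows "euler_sum E \<beta> w (insert v U) X c z =
    euler_sum E \<beta> w U X c z + euler_sum E \<beta> w U (insert v X) (c + w v) z * z v ^ w v"
proof -
  have "finite T \<and> v \<notin> T" if "T \<in> Pow U" for T
    using assms that finite_subset by auto
  thus ?thesis
    unfolding euler_sum_def sum_Pow_insert[OF assms] sum.distrib sum_distrib_right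
    by (intro arg_cong2[where f = "(+)"] sum.cong refl) (simp_all add: algebra_simps)
qed

lemma euler_sum_cong:
  assumes "\<And>u. u \<in> U \<Longrightarrow> w u = w' u" "\<And>u. u \<in> U \<Longrightarrow> z u = z' u"
  shows "euler_sum E \<beta> w U X c z = euler_sum E \<beta> w' U X c z'"
  unfolding euler_sum_def using assms
  by (intro sum.cong refl arg_cong2[where f = "(*)"] arg_cong[where f = of_nat] arg_cong2[where f = "(+)"]
      sum.cong prod.cong) auto

lemma euler_sum_dcut_cong:
  assumes "\<And>T. T \<subseteq> U \<Longrightarrow> dcut E (X \<union> T) = dcut E' (X' \<union> T)"
  shows "euler_sum E \<beta> w U X c z = euler_sum E' \<beta> w U X' c z"
  unfolding euler_sum_def using assms by (intro sum.cong) auto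

lemma isCont_euler_sum_scaled:
  "isCont (\<lambda>l. euler_sum E \<beta> w U X c (\<lambda>u. complex_of_real l * z u)) l"
  unfolding euler_sum_def by (intro continuous_intros)

lemma euler_sum_insert2:
  assumes "finite U" "v1 \<notin> U" "v2 \<notin> U" "v1 \<noteq> v2"
  shows "euler_sum E \<beta> w (insert v1 (insert v2 U)) {} 0 z =
    euler_sum E \<beta> w U {} 0 z
    + euler_sum E \<beta> w U {v1} (w v1) z * z v1 ^ w v1
    + euler_sum E \<beta> w U {v2} (w v2) z * z v2 ^ w v2
    + euler_sum E \<beta> w U {v1, v2} (w v1 + w v2) z * z v1 ^ w v1 * z v2 ^ w v2"
proof -
  have "euler_sum E \<beta> w (insert v1 (insert v2 U)) {} 0 z =
      euler_sum E \<beta> w (insert v2 U) {} 0 z + euler_sum E \<beta> w (insert v2 U) {v1} (w v1) z * z v1 ^ w v1"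
    using assms euler_sum_insert[of "insert v2 U" v1] by simp
  moreover have "euler_sum E \<beta> w (insert v2 U) {} 0 z =
      euler_sum E \<beta> w U {} 0 z + euler_sum E \<beta> w U {v2} (w v2) z * z v2 ^ w v2"
    using assms euler_sum_insert[of U v2] by simp
  moreover have "euler_sum E \<beta> w (insert v2 U) {v1} (w v1) z =
      euler_sum E \<beta> w U {v1} (w v1) z + euler_sum E \<beta> w U {v1, v2} (w v1 + w v2) z * z v2 ^ w v2"
    using assms euler_sum_insert[of U v2 E \<beta> w "{v1}"] by (simp add: insert_commute)
  ultimately show ?thesis
    by (simp add: distrib_right mult.assoc)
qed

text \<open>Scaling all variables by a real l turns the Euler sum into a polynomial in l whose
  top coefficient, coming from T = U alone, is nonzero.\<close>
lemma finite_zeros_euler_sum_scaled: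
  assumes "finite U" "\<And>u. u \<in> U \<Longrightarrow> 0 < w u" "\<And>u. u \<in> U \<Longrightarrow> z u \<noteq> 0" "0 < \<beta>" "0 < c"
  shows "finite {l. euler_sum E \<beta> w U X c (\<lambda>u. complex_of_real l * z u) = 0}"
proof -
  define d where "d T = complex_of_real (\<beta> ^ dcut E (X \<union> T)) * of_nat (c + sum w T) * (\<Prod>u\<in>T. z u ^ w u)" for T
  define p where "p = (\<Sum>T\<in>Pow U. monom (d T) (sum w T))"
  have "(\<Prod>u\<in>T. (complex_of_real l * z u) ^ w u) = complex_of_real l ^ sum w T * (\<Prod>u\<in>T. z u ^ w u)"
    for l T by (simp add: power_mult_distrib prod.distrib power_sum)
  hence euler_poly: "euler_sum E \<beta> w U X c (\<lambda>u. complex_of_real l * z u) = poly p (complex_of_real l)" for l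
    unfolding euler_sum_def p_def poly_sum poly_monom d_def by (simp add: ac_simps)
  have "sum w T \<noteq> sum w U" if "T \<in> Pow U" "T \<noteq> U" for T
    using sum_strict_mono2[OF \<open>finite U\<close>, of T] that assms(2) by fastforce
  hence "coeff p (sum w U) = (\<Sum>T\<in>Pow U. if T = U then d T else 0)"
    unfolding p_def coeff_sum coeff_monom by (intro sum.cong refl) auto
  also have "\<dots> = d U"
    using \<open>finite U\<close> by simp
  finally have "coeff p (sum w U) = d U" .
  moreover have "d U \<noteq> 0"
  proof -
    have "(of_nat (c + sum w U) :: complex) \<noteq> 0"
      using \<open>0 < c\<close> by (simp only: of_nat_eq_0_iff)
    thus ?thesis
      unfolding d_def using assms(1,3-4) by simp
  qed
  ultimately have "p \<noteq> 0"
    by auto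
  hence "finite (complex_of_real -` {x. poly p x = 0})"
    by (intro finite_vimageI poly_roots_finite inj_of_real)
  thus ?thesis
    unfolding euler_poly by (simp only: vimage_Collect_eq mem_Collect_eq)
qed

section \<open>Multigraphs and vertex merging\<close>

lemma size_2_multisetE:
  assumes "size e = 2"
  obtains x y where "e = {#x, y#}"
proof -
  obtain x e' where "e = add_mset x e'" "size e' = 1"
    using assms size_eq_Suc_imp_eq_union[of e 1] by auto
  moreover obtain y where "e' = {#y#}"
    using \<open>size e' = 1\<close> size_eq_Suc_imp_eq_union[of e' 0] by auto
  ultimately show thesis
    using that by simp
qed

lemma cut_pair_iff:
  "(\<exists>x y. {#a, b#} = {#x, y#} \<and> (x \<in> S) \<noteq> (y \<in> S)) \<longleftrightarrow> (a \<in> S) \<noteq> (b \<in> S)"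
  by (auto simp: add_eq_conv_ex)

lemma dcut_image_mset:
  assumes "\<forall>e\<in>#E. size e = 2"
  shows "dcut (image_mset (image_mset f) E) S = dcut E (f -` S)"
  unfolding dcut_def filter_mset_image_mset size_image_mset
proof (intro arg_cong[where f = size] filter_mset_cong refl)
  fix e assume "e \<in># E"
  then obtain x y where "e = {#x, y#}"
    using assms size_2_multisetE by blast
  thus "(\<exists>a b. image_mset f e = {#a, b#} \<and> (a \<in> S) \<noteq> (b \<in> S)) \<longleftrightarrow>
      (\<exists>a b. e = {#a, b#} \<and> (a \<in> f -` S) \<noteq> (b \<in> f -` S))"
    using cut_pair_iff[of "f x" "f y" S] cut_pair_iff[of x y "f -` S"] by simp
qed

lemma mdeg_merge_edges:
  assumes "v1 \<noteq> v2" "u \<noteq> v2"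
  shows "mdeg (merge_edges v1 v2 E) u = (if u = v1 then mdeg E v1 + mdeg E v2 else mdeg E u)"
proof -
  have "count (image_mset (\<lambda>x. if x = v2 then v1 else x) e) u =
      (if u = v1 then count e v1 + count e v2 else count e u)" for e
    using assms by (induction e) auto
  thus ?thesis
    unfolding mdeg_def merge_edges_def by (simp add: image_mset.compositionality o_def sum_mset.distrib)
qed

lemma mdeg_pos_if_connected:
  assumes "mconnected V E" "x \<in> V" "y \<in> V" "x \<noteq> y"
  shows "0 < mdeg E x"
proof -
  have "(x, y) \<in> {(a, b). adj E a b}\<^sup>*"
    using assms(1-3) unfolding mconnected_def by blast
  then obtain x' where "{#x, x'#} \<in># E"
    using \<open>x \<noteq> y\<close> by (auto simp: adj_def elim: converse_rtranclE)
  then obtain E' where "E = add_mset {#x, x'#} E'"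
    by (blast dest: multi_member_split)
  thus ?thesis
    by (simp add: mdeg_def)
qed

lemma legal_unmerge:
  assumes "legal (V - {v2}) (merge_edges v1 v2 E) w1" "v1 \<in> V" "v1 \<noteq> v2"
    and "0 < mdeg E v1" "0 < mdeg E v2"
  shows "legal V E (w1(v1 := w1 v1 - mdeg E v2, v2 := mdeg E v2))"
  unfolding legal_def
proof
  fix u assume "u \<in> V"
  have "mdeg (merge_edges v1 v2 E) v1 \<le> w1 v1"
    using assms(1-3) by (simp add: legal_def)
  moreover have "mdeg (merge_edges v1 v2 E) u \<le> w1 u" "0 < w1 u" if "u \<noteq> v2"
    using assms(1) \<open>u \<in> V\<close> that by (auto simp: legal_def)
  ultimately show "0 < (w1(v1 := w1 v1 - mdeg E v2, v2 := mdeg E v2)) u \<and>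
      mdeg E u \<le> (w1(v1 := w1 v1 - mdeg E v2, v2 := mdeg E v2)) u"
    using assms(3-5) by (auto simp: mdeg_merge_edges)
qed

lemma exists_root_norm_ge_1:
  fixes x :: complex
  assumes "0 < n" "1 \<le> norm x"
  obtains r where "r ^ n = x" "1 \<le> norm r"
proof
  define r where "r = exp (Ln x / of_nat n)"
  have "x \<noteq> 0"
    using assms(2) by auto
  have "r ^ n = exp (of_nat n * (Ln x / of_nat n))"
    unfolding r_def by (simp only: exp_of_nat_mult)
  also have "\<dots> = x"
    using \<open>x \<noteq> 0\<close> \<open>0 < n\<close> by simp
  finally show "r ^ n = x" .
  hence "norm r ^ n = norm x"
    by (metis norm_power)
  thus "1 \<le> norm r"
    using assms power_less_one_iff[OF norm_ge_zero, of r n] by linarith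
qed

lemma zero_free_bilinear_if_weighted_strict_GL:
  assumes GL: "weighted_strict_GL V E" and "legal V E w" "0 < \<beta>" "\<beta> < 1"
    and V: "V = insert v1 (insert v2 U)" "finite U" "v1 \<notin> U" "v2 \<notin> U" "v1 \<noteq> v2"
    and \<zeta>: "\<And>u. u \<in> U \<Longrightarrow> 1 \<le> norm (\<zeta> u)"
  shows "zero_free_bilinear (euler_sum E \<beta> w U {} 0 \<zeta>) (euler_sum E \<beta> w U {v1} (w v1) \<zeta>)
    (euler_sum E \<beta> w U {v2} (w v2) \<zeta>) (euler_sum E \<beta> w U {v1, v2} (w v1 + w v2) \<zeta>)"
  unfolding zero_free_bilinear_def
proof (intro allI impI)
  fix x y :: complex
  assume "1 \<le> norm x" "1 \<le> norm y"
  have "0 < w v1" "0 < w v2"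
    using \<open>legal V E w\<close> V(1) by (auto simp: legal_def)
  obtain rx where rx: "rx ^ w v1 = x" "1 \<le> norm rx"
    using exists_root_norm_ge_1[OF \<open>0 < w v1\<close> \<open>1 \<le> norm x\<close>] .
  obtain ry where ry: "ry ^ w v2 = y" "1 \<le> norm ry"
    using exists_root_norm_ge_1[OF \<open>0 < w v2\<close> \<open>1 \<le> norm y\<close>] .
  have "finite V"
    using V by simp
  define z where "z = \<zeta>(v1 := rx, v2 := ry)"
  have "\<forall>v\<in>V. 1 \<le> norm (z v)"
    using \<zeta> rx ry V by (auto simp: z_def)
  hence "DG V (Zw V E w \<beta>) z \<noteq> 0"
    using GL \<open>legal V E w\<close> \<open>0 < \<beta>\<close> \<open>\<beta> < 1\<close> unfolding weighted_strict_GL_def by blast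
  have "euler_sum E \<beta> w U X c z = euler_sum E \<beta> w U X c \<zeta>" for X c
    using V by (intro euler_sum_cong) (auto simp: z_def)
  moreover have "z v1 = rx" "z v2 = ry"
    using V(5) by (simp_all add: z_def)
  ultimately have "DG V (Zw V E w \<beta>) z = euler_sum E \<beta> w U {} 0 \<zeta> + euler_sum E \<beta> w U {v1} (w v1) \<zeta> * x
      + euler_sum E \<beta> w U {v2} (w v2) \<zeta> * y + euler_sum E \<beta> w U {v1, v2} (w v1 + w v2) \<zeta> * x * y"
    (is "_ = ?P")
    unfolding V(1) DG_Zw[OF \<open>finite V\<close>[unfolded V(1)]] euler_sum_insert2[OF V(2-5)]
    by (simp add: rx(1) ry(1))
  with \<open>DG V (Zw V E w \<beta>) z \<noteq> 0\<close> show "?P \<noteq> 0"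
    by simp
qed

lemma DG_Zw_merge_edges:
  assumes "mgraph V E" "v1 \<in> V" "v1 \<noteq> v2"
  shows "DG (V - {v2}) (Zw (V - {v2}) (merge_edges v1 v2 E) w \<beta>) z =
    euler_sum E \<beta> w (V - {v1, v2}) {} 0 z + euler_sum E \<beta> w (V - {v1, v2}) {v1, v2} (w v1) z * z v1 ^ w v1"
proof -
  define U where "U = V - {v1, v2}"
  define f where "f x = (if x = v2 then v1 else x)" for x
  have U: "finite U" "v1 \<notin> U" "V - {v2} = insert v1 U"
    using assms by (auto simp: U_def mgraph_def)
  have edges: "\<forall>e\<in>#E. size e = 2" and E1: "merge_edges v1 v2 E = image_mset (image_mset f) E"
    using assms(1) by (simp_all add: mgraph_def merge_edges_def f_def[abs_def])
  have "euler_sum (merge_edges v1 v2 E) \<beta> w U {} 0 z = euler_sum E \<beta> w U {} 0 z"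
  proof (rule euler_sum_dcut_cong)
    fix T assume "T \<subseteq> U"
    hence "f -` T = T"
      unfolding vimage_def by (auto simp: f_def U_def split: if_splits)
    thus "dcut (merge_edges v1 v2 E) ({} \<union> T) = dcut E ({} \<union> T)"
      unfolding E1 dcut_image_mset[OF edges] by simp
  qed
  moreover have "euler_sum (merge_edges v1 v2 E) \<beta> w U {v1} (w v1) z = euler_sum E \<beta> w U {v1, v2} (w v1) z"
  proof (rule euler_sum_dcut_cong)
    fix T assume "T \<subseteq> U"
    hence "f -` ({v1} \<union> T) = {v1, v2} \<union> T"
      using assms(3) unfolding vimage_def by (auto simp: f_def U_def)
    thus "dcut (merge_edges v1 v2 E) ({v1} \<union> T) = dcut E ({v1, v2} \<union> T)"
      unfolding E1 dcut_image_mset[OF edges] by simp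
  qed
  ultimately show ?thesis
    unfolding U(3) DG_Zw[OF finite.insertI[OF U(1)]] euler_sum_insert[OF U(1,2)]
    by (simp add: U_def)
qed

lemma weighted_strict_GL_merge_edges:
  assumes "mgraph V E" "weighted_strict_GL V E" "v1 \<in> V" "v2 \<in> V" "v1 \<noteq> v2"
    and "0 < mdeg E v1" "0 < mdeg E v2"
  shows "weighted_strict_GL (V - {v2}) (merge_edges v1 v2 E)"
  unfolding weighted_strict_GL_def
proof (intro allI impI)
  fix w1 :: "'a \<Rightarrow> nat" and \<beta> :: real and z1 :: "'a \<Rightarrow> complex"
  assume legal1: "legal (V - {v2}) (merge_edges v1 v2 E) w1" and "0 < \<beta>" "\<beta> < 1"
    and z1: "\<forall>v\<in>V - {v2}. 1 \<le> norm (z1 v)"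
  define U where "U = V - {v1, v2}"
  define w where "w = w1(v1 := w1 v1 - mdeg E v2, v2 := mdeg E v2)"
  have U: "V = insert v1 (insert v2 U)" "finite U" "v1 \<notin> U" "v2 \<notin> U"
    using assms(1,3,4) by (auto simp: U_def mgraph_def)
  have legal: "legal V E w"
    unfolding w_def using legal_unmerge[OF legal1 assms(3,5-7)] .
  have "mdeg (merge_edges v1 v2 E) v1 \<le> w1 v1"
    using legal1 assms(3,5) by (simp add: legal_def)
  hence "mdeg E v1 + mdeg E v2 \<le> w1 v1"
    using assms(5) by (simp add: mdeg_merge_edges)
  hence "w v1 + w v2 = w1 v1"
    using assms(5) by (simp add: w_def)
  have w_w1: "euler_sum E \<beta> w U X c z = euler_sum E \<beta> w1 U X c z" for X c z
    using U(3,4) by (intro euler_sum_cong) (auto simp: w_def)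
  define \<zeta> where "\<zeta> = (\<lambda>l u. complex_of_real l * z1 u)"
  define A B C D where "A = (\<lambda>l. euler_sum E \<beta> w U {} 0 (\<zeta> l))"
    and "B = (\<lambda>l. euler_sum E \<beta> w U {v1} (w v1) (\<zeta> l))"
    and "C = (\<lambda>l. euler_sum E \<beta> w U {v2} (w v2) (\<zeta> l))"
    and "D = (\<lambda>l. euler_sum E \<beta> w U {v1, v2} (w v1 + w v2) (\<zeta> l))"
  have "zero_free_bilinear (A l) (B l) (C l) (D l)" if "1 \<le> l" for l
    unfolding A_def B_def C_def D_def
  proof (rule zero_free_bilinear_if_weighted_strict_GL[OF assms(2) legal \<open>0 < \<beta>\<close> \<open>\<beta> < 1\<close> U assms(5)])
    fix u assume "u \<in> U"
    hence "1 \<le> norm (z1 u)"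
      using z1 by (simp add: U_def)
    thus "1 \<le> norm (\<zeta> l u)"
      using that mult_mono[of 1 l 1 "norm (z1 u)"] by (simp add: \<zeta>_def norm_mult)
  qed
  moreover have "isCont B 1" "isCont C 1" "isCont D 1"
    unfolding B_def C_def D_def \<zeta>_def by (rule isCont_euler_sum_scaled)+
  moreover have "finite {l. D l = 0}"
    unfolding D_def \<zeta>_def
  proof (rule finite_zeros_euler_sum_scaled[OF U(2) _ _ \<open>0 < \<beta>\<close>])
    fix u assume "u \<in> U"
    hence "u \<in> V" "u \<noteq> v2"
      by (simp_all add: U_def)
    thus "0 < w u"
      using legal by (simp add: legal_def)
    have "1 \<le> norm (z1 u)"
      using z1 \<open>u \<in> V\<close> \<open>u \<noteq> v2\<close> by simp
    thus "z1 u \<noteq> 0"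
      by auto
  next
    show "0 < w v1 + w v2"
      using legal assms(3) by (simp add: legal_def)
  qed
  moreover have "1 \<le> norm (z1 v1 ^ w1 v1)"
    using z1 assms(3,5) by (simp add: norm_power one_le_power)
  ultimately have "A 1 + D 1 * z1 v1 ^ w1 v1 \<noteq> 0"
    by (rule asano_contraction_limit)
  moreover have "DG (V - {v2}) (Zw (V - {v2}) (merge_edges v1 v2 E) w1 \<beta>) z1 = A 1 + D 1 * z1 v1 ^ w1 v1"
    unfolding DG_Zw_merge_edges[OF assms(1,3,5)] A_def D_def
    using \<open>w v1 + w v2 = w1 v1\<close> w_w1
    by (simp add: \<zeta>_def U_def)
  ultimately show "DG (V - {v2}) (Zw (V - {v2}) (merge_edges v1 v2 E) w1 \<beta>) z1 \<noteq> 0"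
    by simp
qed

theorem lemma8:
  fixes V :: "'a set" and E :: "'a multiset multiset" and v1 v2 :: 'a
  assumes "mgraph V E" and "mconnected V E" and "weighted_strict_GL V E"
    and "v1 \<in> V" and "v2 \<in> V" and "v1 \<noteq> v2" and "\<not> adj E v1 v2"
  shows "weighted_strict_GL (V - {v2}) (merge_edges v1 v2 E)"
proof (rule weighted_strict_GL_merge_edges[OF assms(1,3-6)])
  show "0 < mdeg E v1"
    using mdeg_pos_if_connected[OF assms(2,4,5,6)] .
  show "0 < mdeg E v2"
    using mdeg_pos_if_connected[OF assms(2,5,4)] assms(6) by simp
qed

end
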